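(* Let $\sigma$ be a strongly erasing $k$-block substitution with $w_\epsilon\ne1^k$ that satisfies the optimality condition. Then $f_\sigma$ has $1/2$-sensitive dependence on initial conditions: for every $x\in\mathbb I$ and every $\delta>0$ there exist $z\in\mathbb I$ with $|x-z|<\delta$ and $n\in\mathbb N$ such that $|f_\sigma^n(x)-f_\sigma^n(z)|\ge 1/2$.
   Context: Notation: $\mathbb I=[0,1]$. $\{0,1\}^*$ and $\{0,1\}^\omega$ denote finite and infinite binary words, and $\epsilon$ is the empty word. For a word $w$, set $0.w=\sum_iw_i2^{-i}$. For $x\in(0,1]$, $\widetilde x$ is the unique infinite binary expansion of $x$ not ending in $0^\infty$. Fix $k\ge2$. An erasing $k$-block substitution is a map $\sigma:\{0,1\}^k\to\{0,1\}^*$ with exactly one block $w_\epsilon$ such that $\sigma(w_\epsilon)=\epsilon$. It acts blockwise on infinite words and on finite words of length a multiple of $k$. $k$-rounding: a $k$-rounding of $w$ is any word $wv$ whose length is the least multiple of $k$ that is $\ge|w|$; if $|w|$ is a multiple of $k$, the only $k$-rounding of $w$ is $w$. $\sigma$ is strongly erasing if for every $w\in\{0,1\}^*$ there exist $n\in\mathbb N$ and words $r_0,\dots,r_{n-1}$ such that $r_0$ is a $k$-rounding of $w$, $r_j$ is a $k$-rounding of $\sigma(r_{j-1})$ for $1\le j\le n-1$, and $\sigma(r_{n-1})=\epsilon$. The map $f_\sigma:\mathbb I\to\mathbb I$ is defined by $f_\sigma(x)=0.\sigma(\widetilde x)$ if $x\in(0,1]$ and $\widetilde x\neq w_\epsilon^\infty$,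 and $f_\sigma(x)=0$ otherwise. Optimality condition: every $w\in\{0,1\}^\omega$ can be written as $w=\prod_{i\ge1}\sigma(b_i)$ with blocks $b_i\in\{0,1\}^k$ satisfying $\sigma(b_i)\ne\epsilon$. *)

theory Defs
  imports Complex_Main
begin

text \<open>Binary words: finite words are bool lists (True = 1, False = 0),
infinite words are functions nat \<Rightarrow> bool (position 0 is the first letter).\<close>

definition bval :: "bool list \<Rightarrow> real" where
  "bval w = (\<Sum>i<length w. (if w ! i then 1 else 0) / 2 ^ (i + 1))"

definition ival :: "(nat \<Rightarrow> bool) \<Rightarrow> real" where
  "ival w = (\<Sum>i. (if w i then 1 else 0) / 2 ^ (i + 1))"

definition tilde :: "real \<Rightarrow> (nat \<Rightarrow> bool)" where
  "tilde x = (THE w. (\<forall>n. \<exists>m\<ge>n. w m) \<and> ival w = x)"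

definition chunks :: "nat \<Rightarrow> bool list \<Rightarrow> bool list list" where
  "chunks k r = map (\<lambda>i. take k (drop (i * k) r)) [0..<length r div k]"

definition iblock :: "nat \<Rightarrow> (nat \<Rightarrow> bool) \<Rightarrow> nat \<Rightarrow> bool list" where
  "iblock k w i = map w [i * k..<(i + 1) * k]"

definition subst_fin :: "(bool list \<Rightarrow> bool list) \<Rightarrow> nat \<Rightarrow> bool list \<Rightarrow> bool list" where
  "subst_fin \<sigma> k r = concat (map \<sigma> (chunks k r))"

text \<open>Prefix of \<sigma>(w) produced by the first n blocks of an infinite word w,
and the value 0.\<sigma>(w) as the limit of the values of these prefixes
(works whether \<sigma>(w) is finite or infinite).\<close>
definition subst_pre :: "(bool list \<Rightarrow> bool list) \<Rightarrow> nat \<Rightarrow> (nat \<Rightarrow> bool) \<Rightarrow> nat \<Rightarrow> bool list" where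
  "subst_pre \<sigma> k w n = concat (map (\<lambda>i. \<sigma> (iblock k w i)) [0..<n])"

definition subst_val :: "(bool list \<Rightarrow> bool list) \<Rightarrow> nat \<Rightarrow> (nat \<Rightarrow> bool) \<Rightarrow> real" where
  "subst_val \<sigma> k w = lim (\<lambda>n. bval (subst_pre \<sigma> k w n))"

definition erasing_subst :: "(bool list \<Rightarrow> bool list) \<Rightarrow> nat \<Rightarrow> bool" where
  "erasing_subst \<sigma> k \<longleftrightarrow> (\<exists>!b. length b = k \<and> \<sigma> b = [])"

definition w_eps :: "(bool list \<Rightarrow> bool list) \<Rightarrow> nat \<Rightarrow> bool list" where
  "w_eps \<sigma> k = (THE b. length b = k \<and> \<sigma> b = [])"

definition k_rounding :: "nat \<Rightarrow> bool list \<Rightarrow> bool list \<Rightarrow> bool" where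
  "k_rounding k w r \<longleftrightarrow> (\<exists>v. r = w @ v) \<and>
     length r = (LEAST m. k dvd m \<and> length w \<le> m)"

definition strongly_erasing :: "(bool list \<Rightarrow> bool list) \<Rightarrow> nat \<Rightarrow> bool" where
  "strongly_erasing \<sigma> k \<longleftrightarrow>
     (\<forall>w. \<exists>n \<ge> 1. \<exists>r :: nat \<Rightarrow> bool list.
        k_rounding k w (r 0) \<and>
        (\<forall>j. 1 \<le> j \<and> j \<le> n - 1 \<longrightarrow> k_rounding k (subst_fin \<sigma> k (r (j - 1))) (r j)) \<and>
        subst_fin \<sigma> k (r (n - 1)) = [])"

definition optimal_subst :: "(bool list \<Rightarrow> bool list) \<Rightarrow> nat \<Rightarrow> bool" where
  "optimal_subst \<sigma> k \<longleftrightarrow>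
     (\<forall>w :: nat \<Rightarrow> bool. \<exists>b :: nat \<Rightarrow> bool list.
        (\<forall>i. length (b i) = k \<and> \<sigma> (b i) \<noteq> []) \<and>
        (\<forall>n. let p = concat (map (\<lambda>i. \<sigma> (b i)) [0..<n]) in
               p = map w [0..<length p]))"

definition f_sigma :: "(bool list \<Rightarrow> bool list) \<Rightarrow> nat \<Rightarrow> real \<Rightarrow> real" where
  "f_sigma \<sigma> k x =
     (if 0 < x \<and> x \<le> 1 \<and> tilde x \<noteq> (\<lambda>i. w_eps \<sigma> k ! (i mod k))
      then subst_val \<sigma> k (tilde x) else 0)"

end

theory Submission
  imports Defs
begin

text \<open>Every cylinder [w] of binary words is mapped by some iterate of f onto all of [0,1].
  Strong erasure shrinks w, after finitely many applications of the substitution and roundings,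
  to the empty word; running this chain backwards, optimality lets one extend each intermediate
  word so that its image is any prescribed infinite word. Choosing a dyadic cylinder around x
  of width less than \<delta> and the target 1 or 0, whichever is farther from the n-th iterate of x,
  yields the point z.\<close>

definition prefix_of :: "bool list \<Rightarrow> (nat \<Rightarrow> bool) \<Rightarrow> bool" where
  "prefix_of p u \<longleftrightarrow> p = map u [0..<length p]"

abbreviation infinitely_many_ones :: "(nat \<Rightarrow> bool) \<Rightarrow> bool" where
  "infinitely_many_ones u \<equiv> \<forall>n. \<exists>m\<ge>n. u m"

abbreviation bit_term :: "(nat \<Rightarrow> bool) \<Rightarrow> nat \<Rightarrow> real" where
  "bit_term u i \<equiv> (if u i then 1 else 0) / 2 ^ (i + 1)"

lemma summable_bit_term: "summable (bit_term u)"
proof (rule summable_comparison_test'[where N = 0])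
  show "summable (\<lambda>i. (1/2::real) ^ Suc i)"
    using power_half_series sums_summable by blast
qed (simp add: power_one_over)

lemma ival_nonneg: "0 \<le> ival u"
  unfolding ival_def by (rule suminf_nonneg[OF summable_bit_term]) auto

lemma ival_le_1: "ival u \<le> 1"
proof -
  have "ival u \<le> (\<Sum>i. (1/2::real) ^ Suc i)"
    unfolding ival_def
    by (rule suminf_le) (use power_half_series sums_summable summable_bit_term in \<open>auto simp: power_one_over\<close>)
  also have "\<dots> = 1" using power_half_series sums_unique by metis
  finally show ?thesis .
qed

lemma ival_pos: "u j \<Longrightarrow> 0 < ival u"
  unfolding ival_def by (rule suminf_pos2[OF summable_bit_term, where i = j]) auto

lemma ival_const_True: "ival (\<lambda>_. True) = 1"
  unfolding ival_def using power_half_series by (simp add: power_one_over sums_iff)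

lemma ival_const_False: "ival (\<lambda>_. False) = 0"
  unfolding ival_def by simp

lemma ival_split: "ival u = bval (map u [0..<l]) + ival (\<lambda>i. u (i + l)) / 2 ^ l"
proof -
  have "ival u = (\<Sum>i. bit_term u (i + l)) + (\<Sum>i<l. bit_term u i)"
    unfolding ival_def by (rule suminf_split_initial_segment[OF summable_bit_term])
  also have "(\<Sum>i. bit_term u (i + l)) = (\<Sum>i. bit_term (\<lambda>i. u (i + l)) i / 2 ^ l)"
    by (rule arg_cong[where f = suminf]) (auto simp: power_add)
  also have "\<dots> = ival (\<lambda>i. u (i + l)) / 2 ^ l"
    unfolding ival_def by (rule suminf_divide[OF summable_bit_term])
  finally show ?thesis by (simp add: bval_def)
qed

lemma prefix_of_ival_bounds:
  assumes "prefix_of p u"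
  shows "bval p \<le> ival u" and "ival u \<le> bval p + 1 / 2 ^ length p"
proof -
  have "ival u = bval p + ival (\<lambda>i. u (i + length p)) / 2 ^ length p"
    using ival_split[of u "length p"] assms unfolding prefix_of_def by simp
  then show "bval p \<le> ival u" and "ival u \<le> bval p + 1 / 2 ^ length p"
    using ival_nonneg ival_le_1 by (simp_all add: divide_right_mono)
qed

lemma ival_less_at_first_difference:
  assumes "\<forall>j<i. u j = v j" and "u i" and "\<not> v i" and "u j" and "i < j"
  shows "ival v < ival u"
proof -
  let ?u = "\<lambda>n. u (n + i)" and ?v = "\<lambda>n. v (n + i)"
  have same_prefix: "map u [0..<i] = map v [0..<i]" using assms(1) by (simp add: map_eq_conv)
  have split: "ival u - ival v = (ival ?u - ival ?v) / 2 ^ i"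
    using ival_split[of u i] ival_split[of v i] unfolding same_prefix by (simp add: diff_divide_distrib)
  have "0 < ival (\<lambda>n. ?u (n + 1))" using assms(4,5) by (intro ival_pos[where j = "j - i - 1"]) simp
  then have "ival ?v < ival ?u"
    using ival_split[of ?u 1] ival_split[of ?v 1] ival_le_1[of "\<lambda>n. ?v (n + 1)"] assms(2,3)
    by (simp add: bval_def)
  then have "0 < (ival ?u - ival ?v) / 2 ^ i" by simp
  then show ?thesis using split by linarith
qed

lemma ival_inj:
  assumes "infinitely_many_ones u" and "infinitely_many_ones v" and "ival u = ival v"
  shows "u = v"
proof (rule ccontr)
  assume "u \<noteq> v"
  then have ex: "\<exists>i. u i \<noteq> v i" by auto
  define i where "i = (LEAST i. u i \<noteq> v i)"
  have differ: "u i \<noteq> v i" unfolding i_def using LeastI_ex[OF ex] .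
  have agree: "\<forall>j<i. u j = v j" unfolding i_def using not_less_Least by blast
  obtain ju jv where "u ju" "i < ju" "v jv" "i < jv" using assms(1,2) by (meson Suc_le_eq)
  then have "ival v < ival u \<or> ival u < ival v"
    using differ agree ival_less_at_first_difference[of i u v] ival_less_at_first_difference[of i v u]
    by (cases "u i") auto
  then show False using assms(3) by simp
qed

lemma tilde_ival: "infinitely_many_ones u \<Longrightarrow> tilde (ival u) = u"
  unfolding tilde_def by (rule the_equality) (auto intro: ival_inj)

lemma bval_Cons: "bval (b # w) = (if b then 1 else 0) / 2 + bval w / 2"
proof -
  have "bval (b # w) = (\<Sum>i<Suc (length w). (if (b # w) ! i then 1 else 0) / 2 ^ (i + 1))"
    unfolding bval_def by simp
  also have "\<dots> = (if b then 1 else 0) / 2 + (\<Sum>i<length w. (if w ! i then 1 else 0) / 2 ^ (i + 2))"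
    by (subst sum.lessThan_Suc_shift) simp
  also have "(\<Sum>i<length w. (if w ! i then 1 else 0) / 2 ^ (i + 2)) = bval w / (2::real)"
    unfolding bval_def sum_divide_distrib by (intro sum.cong) auto
  finally show ?thesis .
qed

lemma dyadic_approximation:
  "0 \<le> x \<Longrightarrow> x \<le> 1 \<Longrightarrow> \<exists>w. length w = L \<and> bval w \<le> x \<and> x \<le> bval w + 1 / 2 ^ L"
proof (induction L arbitrary: x)
  case 0
  then show ?case by (intro exI[of _ "[]"]) (simp add: bval_def)
next
  case (Suc L)
  show ?case
  proof (cases "1/2 \<le> x")
    case True
    with Suc.prems obtain w where "length w = L" "bval w \<le> 2 * x - 1" "2 * x - 1 \<le> bval w + 1 / 2 ^ L"
      using Suc.IH[of "2 * x - 1"] by auto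
    then show ?thesis by (intro exI[of _ "True # w"]) (auto simp: bval_Cons)
  next
    case False
    with Suc.prems obtain w where "length w = L" "bval w \<le> 2 * x" "2 * x \<le> bval w + 1 / 2 ^ L"
      using Suc.IH[of "2 * x"] by auto
    then show ?thesis by (intro exI[of _ "False # w"]) (auto simp: bval_Cons)
  qed
qed

lemma dyadic_cylinder_near:
  assumes "0 \<le> x" "x \<le> 1"
  obtains w where "length w = L" "\<And>u. prefix_of w u \<Longrightarrow> \<bar>x - ival u\<bar> \<le> 1 / 2 ^ L"
proof -
  obtain w where "length w = L" "bval w \<le> x" "x \<le> bval w + 1 / 2 ^ L"
    using dyadic_approximation assms by blast
  then show thesis using prefix_of_ival_bounds by (intro that) force+
qed

lemma prefix_of_Nil [simp]: "prefix_of [] u"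
  unfolding prefix_of_def by simp

lemma prefix_of_appendD: "prefix_of (p @ q) u \<Longrightarrow> prefix_of p u"
  unfolding prefix_of_def by (simp add: upt_add_eq_append[of 0 "length p"] append_eq_append_conv)

lemma prefix_of_append:
  assumes "prefix_of p u" and "prefix_of q (\<lambda>i. u (i + length p))"
  shows "prefix_of (p @ q) u"
proof -
  have "[length p..<length p + length q] = map (\<lambda>i. i + length p) [0..<length q]"
    by (simp add: map_add_upt add.commute)
  then have "map u [0..<length p + length q] = map u [0..<length p] @ map (\<lambda>i. u (i + length p)) [0..<length q]"
    by (simp add: upt_add_eq_append[of 0 "length p"])
  then show ?thesis using assms unfolding prefix_of_def by simp
qed

lemma bval_tendsto_ival:
  assumes "\<forall>N. prefix_of (p N) t" and "filterlim (\<lambda>N. length (p N)) at_top sequentially"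
  shows "(\<lambda>N. bval (p N)) \<longlonglongrightarrow> ival t"
proof -
  have "(\<lambda>n. (1/2::real) ^ n) \<longlonglongrightarrow> 0" by (rule LIMSEQ_power_zero) simp
  from filterlim_compose[OF this assms(2)]
  have lim: "(\<lambda>N. (1/2::real) ^ length (p N)) \<longlonglongrightarrow> 0" .
  have "norm (bval (p N) - ival t) \<le> norm ((1/2::real) ^ length (p N)) * 1" for N
    using prefix_of_ival_bounds[of "p N" t] assms(1) by (simp add: power_one_over)
  then have "(\<lambda>N. bval (p N) - ival t) \<longlonglongrightarrow> 0"
    by (intro tendsto_0_le[OF lim] always_eventually) blast
  then show ?thesis by (rule LIM_zero_cancel)
qed

lemma subst_pre_add:
  "subst_pre \<sigma> k u (N + d) = subst_pre \<sigma> k u N @ concat (map (\<lambda>i. \<sigma> (iblock k u i)) [N..<N + d])"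
  unfolding subst_pre_def by (simp add: upt_add_eq_append[of 0 N d])

lemma subst_val_eq_ival:
  assumes "\<forall>N. prefix_of (subst_pre \<sigma> k u N) t"
    and "\<forall>d. \<exists>N. d \<le> length (subst_pre \<sigma> k u N)"
  shows "subst_val \<sigma> k u = ival t"
proof -
  have "filterlim (\<lambda>N. length (subst_pre \<sigma> k u N)) at_top sequentially"
    unfolding filterlim_at_top eventually_sequentially
  proof
    fix d
    obtain N where N: "d \<le> length (subst_pre \<sigma> k u N)" using assms(2) by blast
    have "d \<le> length (subst_pre \<sigma> k u n)" if "N \<le> n" for n
      using N subst_pre_add[of \<sigma> k u N "n - N"] that by simp
    then show "\<exists>N. \<forall>n\<ge>N. d \<le> length (subst_pre \<sigma> k u n)" by blast
  qed
  then show ?thesis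
    unfolding subst_val_def using bval_tendsto_ival assms(1) by (blast intro: limI)
qed

lemma w_eps:
  assumes "erasing_subst \<sigma> k"
  shows "length (w_eps \<sigma> k) = k" and "\<sigma> (w_eps \<sigma> k) = []"
proof -
  have "\<exists>!b. length b = k \<and> \<sigma> b = []" using assms unfolding erasing_subst_def .
  then have "length (w_eps \<sigma> k) = k \<and> \<sigma> (w_eps \<sigma> k) = []" unfolding w_eps_def by (rule theI')
  then show "length (w_eps \<sigma> k) = k" and "\<sigma> (w_eps \<sigma> k) = []" by simp_all
qed

lemma k_rounding_imp:
  assumes "0 < k" and "k_rounding k w r"
  shows "\<exists>v. r = w @ v" and "k dvd length r"
proof -
  have "\<exists>m. k dvd m \<and> length w \<le> m" using assms(1) by (intro exI[of _ "k * length w"]) auto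
  from LeastI_ex[OF this] show "k dvd length r" using assms(2) unfolding k_rounding_def by simp
qed (use assms(2) k_rounding_def in blast)

lemma nth_iblock: "j < k \<Longrightarrow> iblock k u i ! j = u (i * k + j)"
  unfolding iblock_def by (simp add: add.commute)

lemma length_iblock [simp]: "length (iblock k u i) = k"
  unfolding iblock_def by simp

lemma iblock_periodic: "length w = k \<Longrightarrow> iblock k (\<lambda>i. w ! (i mod k)) i = w"
  by (rule nth_equalityI) (simp_all add: nth_iblock)

lemma True_in_iblock: "True \<in> set (iblock k u i) \<Longrightarrow> \<exists>j\<ge>i * k. u j"
  unfolding iblock_def by auto

definition append_blocks :: "nat \<Rightarrow> bool list \<Rightarrow> (nat \<Rightarrow> bool list) \<Rightarrow> nat \<Rightarrow> bool" where
  "append_blocks k r c i =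
     (if i < length r then r ! i else c ((i - length r) div k) ! ((i - length r) mod k))"

lemma prefix_of_append_blocks: "prefix_of r (append_blocks k r c)"
  unfolding prefix_of_def append_blocks_def by (rule nth_equalityI) simp_all

lemma iblock_append_blocks:
  assumes "k dvd length r" and "\<forall>i. length (c i) = k"
  shows "iblock k (append_blocks k r c) i =
           (if i < length r div k then take k (drop (i * k) r) else c (i - length r div k))"
proof -
  obtain m where m: "length r = m * k" using assms(1) by (metis dvdE mult.commute)
  show ?thesis
  proof (cases "i < length r div k")
    case True
    then have "0 < k" and "i < m" by (auto simp: m split: if_splits)
    then have "(i + 1) * k \<le> length r" unfolding m by (intro mult_right_mono) auto
    then have "i * k + j < length r" if "j < k" for j
      using that by simp
    then show ?thesis
      using True \<open>(i + 1) * k \<le> length r\<close>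
      by (intro nth_equalityI) (simp_all add: nth_iblock append_blocks_def)
  next
    case False
    have "\<not> i * k + j < length r" and "i * k + j - length r = (i - length r div k) * k + j"
      if "j < k" for j
    proof -
      from that False have "m \<le> i" and "length r div k = m" by (auto simp: m)
      then have "m * k \<le> i * k" by simp
      then show "\<not> i * k + j < length r" and "i * k + j - length r = (i - length r div k) * k + j"
        unfolding m \<open>length r div k = m\<close> by (linarith, simp add: diff_mult_distrib)
    qed
    then show ?thesis
      using False assms(2) by (intro nth_equalityI) (simp_all add: nth_iblock append_blocks_def)
  qed
qed

lemma subst_pre_append_blocks:
  assumes "k dvd length r" and "\<forall>i. length (c i) = k"
  shows "subst_pre \<sigma> k (append_blocks k r c) (length r div k + d) =
           subst_fin \<sigma> k r @ concat (map (\<lambda>i. \<sigma> (c i)) [0..<d])"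
proof -
  let ?u = "append_blocks k r c" and ?m = "length r div k"
  have "subst_pre \<sigma> k ?u ?m = subst_fin \<sigma> k r"
    unfolding subst_pre_def subst_fin_def chunks_def
    using iblock_append_blocks[OF assms] by (auto intro!: arg_cong[where f = concat])
  moreover have "map (\<lambda>i. \<sigma> (iblock k ?u i)) [?m..<?m + d] = map (\<lambda>i. \<sigma> (c i)) [0..<d]"
    using iblock_append_blocks[OF assms] by (simp add: map_add_upt[symmetric] add.commute)
  ultimately show ?thesis using subst_pre_add[of \<sigma> k ?u ?m d] by simp
qed

definition interleave :: "(nat \<Rightarrow> bool list) \<Rightarrow> bool list \<Rightarrow> nat \<Rightarrow> bool list" where
  "interleave b e i = (if even i then b (i div 2) else e)"

lemma concat_map_interleave:
  assumes "\<sigma> e = []"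
  shows "concat (map (\<lambda>i. \<sigma> (interleave b e i)) [0..<2 * d]) = concat (map (\<lambda>i. \<sigma> (b i)) [0..<d])"
  by (induction d) (simp_all add: interleave_def assms)

lemma True_in_set_if_ne:
  assumes "length a = length b" and "a \<noteq> b"
  shows "True \<in> set a \<or> True \<in> set b"
proof (rule ccontr)
  assume "\<not> (True \<in> set a \<or> True \<in> set b)"
  then have "a = replicate (length a) False" and "b = replicate (length b) False"
    by (auto intro!: replicate_eqI)
  then show False using assms by metis
qed

lemma f_sigma_ival:
  assumes "infinitely_many_ones u" and "u \<noteq> (\<lambda>i. w_eps \<sigma> k ! (i mod k))"
  shows "f_sigma \<sigma> k (ival u) = subst_val \<sigma> k u"
proof -
  obtain j where "u j" using assms(1) by blast
  then show ?thesis
    using assms ival_pos ival_le_1 unfolding f_sigma_def tilde_ival[OF assms(1)] by simp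
qed

text \<open>By optimality, continue r by blocks whose images spell out t after \<sigma>(r). Erasing blocks
  are inserted between them so that the word has infinitely many ones (hence is the expansion
  tilde of its value) and differs from the excluded word w_eps^\<omega>.\<close>
lemma f_sigma_preimage_in_cylinder:
  assumes "0 < k" and "erasing_subst \<sigma> k" and "optimal_subst \<sigma> k"
    and "k dvd length r" and "prefix_of (subst_fin \<sigma> k r) t"
  shows "\<exists>u. prefix_of r u \<and> f_sigma \<sigma> k (ival u) = ival t"
proof -
  let ?s = "subst_fin \<sigma> k r" and ?e = "w_eps \<sigma> k" and ?m = "length r div k"
  obtain b where b: "\<forall>i. length (b i) = k \<and> \<sigma> (b i) \<noteq> []"
    and bt: "\<forall>d. prefix_of (concat (map (\<lambda>i. \<sigma> (b i)) [0..<d])) (\<lambda>i. t (i + length ?s))"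
    using assms(3) unfolding optimal_subst_def Let_def prefix_of_def by blast
  define u where "u = append_blocks k r (interleave b ?e)"
  have lengths: "\<forall>i. length (interleave b ?e i) = k"
    using b w_eps[OF assms(2)] by (simp add: interleave_def)
  have blocks: "iblock k u (?m + i) = interleave b ?e i" for i
    unfolding u_def by (simp add: iblock_append_blocks[OF assms(4) lengths])
  have pre: "subst_pre \<sigma> k u (?m + 2 * d) = ?s @ concat (map (\<lambda>i. \<sigma> (b i)) [0..<d])" for d
    unfolding u_def subst_pre_append_blocks[OF assms(4) lengths]
    by (simp add: concat_map_interleave w_eps[OF assms(2)])
  have "prefix_of (subst_pre \<sigma> k u N) t" for N
    using pre[of N] subst_pre_add[of \<sigma> k u N "?m + N"] prefix_of_append[OF assms(5) bt[rule_format]]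
    by (metis prefix_of_appendD add.commute mult_2 add.assoc)
  moreover have "\<exists>N. d \<le> length (subst_pre \<sigma> k u N)" for d
  proof
    have "sum_list (map (\<lambda>_. 1) [0..<d]) \<le> sum_list (map (\<lambda>i. length (\<sigma> (b i))) [0..<d])"
      using b by (intro sum_list_mono) (simp add: Suc_le_eq)
    then show "d \<le> length (subst_pre \<sigma> k u (?m + 2 * d))"
      unfolding pre by (simp add: length_concat sum_list_triv comp_def)
  qed
  ultimately have limit: "subst_val \<sigma> k u = ival t" by (intro subst_val_eq_ival) blast+
  have "infinitely_many_ones u"
  proof
    fix n
    have "iblock k u (?m + 2 * n) = b n" and "iblock k u (?m + 2 * n + 1) = ?e"
      using blocks[of "2 * n"] blocks[of "2 * n + 1"] by (simp_all add: interleave_def)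
    then have "True \<in> set (iblock k u (?m + 2 * n)) \<or> True \<in> set (iblock k u (?m + 2 * n + 1))"
      using b w_eps[OF assms(2)] by (metis True_in_set_if_ne)
    moreover have "x \<le> x * k" for x using assms(1) by simp
    then have "n \<le> (?m + 2 * n) * k" and "n \<le> (?m + 2 * n + 1) * k"
      by (rule order_trans[rotated], simp)+
    ultimately show "\<exists>j\<ge>n. u j" using True_in_iblock le_trans by meson
  qed
  moreover have "u \<noteq> (\<lambda>i. ?e ! (i mod k))"
  proof
    assume "u = (\<lambda>i. ?e ! (i mod k))"
    then have "iblock k u ?m = ?e" using iblock_periodic w_eps[OF assms(2)] by simp
    moreover have "iblock k u ?m = b 0" using blocks[of 0] by (simp add: interleave_def)
    ultimately show False using b w_eps[OF assms(2)] by metis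
  qed
  ultimately show ?thesis
    using f_sigma_ival limit prefix_of_append_blocks unfolding u_def by metis
qed

lemma strongly_erasing_cylinder_onto:
  assumes "0 < k" and "erasing_subst \<sigma> k" and "strongly_erasing \<sigma> k" and "optimal_subst \<sigma> k"
  obtains n where "\<And>t. \<exists>u. prefix_of w u \<and> (f_sigma \<sigma> k ^^ n) (ival u) = ival t"
proof -
  let ?f = "f_sigma \<sigma> k"
  obtain n :: nat and r :: "nat \<Rightarrow> bool list" where "1 \<le> n" and r0: "k_rounding k w (r 0)"
    and rj: "\<forall>j. 1 \<le> j \<and> j \<le> n - 1 \<longrightarrow> k_rounding k (subst_fin \<sigma> k (r (j - 1))) (r j)"
    and erased: "subst_fin \<sigma> k (r (n - 1)) = []"
    using assms(3) unfolding strongly_erasing_def by blast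
  have rSuc: "k_rounding k (subst_fin \<sigma> k (r j)) (r (Suc j))" if "j < n - 1" for j
    using rj[rule_format, of "Suc j"] that by simp
  have dvd: "k dvd length (r j)" if "j \<le> n - 1" for j
  proof (cases j)
    case 0
    then show ?thesis using k_rounding_imp(2)[OF assms(1) r0] by simp
  next
    case (Suc i)
    then show ?thesis using k_rounding_imp(2)[OF assms(1) rSuc[of i]] that by simp
  qed
  have "\<exists>u. prefix_of (r j) u \<and> (?f ^^ (n - j)) (ival u) = ival t" if "j \<le> n - 1" for j t
    using that
  proof (induction j rule: inc_induct)
    case base
    have "\<exists>u. prefix_of (r (n - 1)) u \<and> ?f (ival u) = ival t"
      using f_sigma_preimage_in_cylinder[OF assms(1,2,4) dvd[of "n - 1"]] erased by simp
    moreover have "n - (n - 1) = 1" using \<open>1 \<le> n\<close> by simp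
    ultimately show ?case by simp
  next
    case (step j)
    then obtain u' where u': "prefix_of (r (Suc j)) u'" "(?f ^^ (n - Suc j)) (ival u') = ival t"
      by blast
    obtain v where "r (Suc j) = subst_fin \<sigma> k (r j) @ v"
      using k_rounding_imp(1)[OF assms(1) rSuc[OF step.hyps(2)]] by blast
    with u'(1) have "prefix_of (subst_fin \<sigma> k (r j)) u'" using prefix_of_appendD by simp
    then obtain u where u: "prefix_of (r j) u" "?f (ival u) = ival u'"
      using f_sigma_preimage_in_cylinder[OF assms(1,2,4) dvd[of j]] step.hyps(2) by auto
    have "n - j = Suc (n - Suc j)" using step.hyps(2) by simp
    then have "(?f ^^ (n - j)) (ival u) = (?f ^^ (n - Suc j)) (?f (ival u))"
      by (simp only: funpow_Suc_right comp_apply)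
    then show ?case using u u'(2) by auto
  qed
  then have "\<exists>u. prefix_of (r 0) u \<and> (?f ^^ n) (ival u) = ival t" for t by fastforce
  moreover obtain v where "r 0 = w @ v" using k_rounding_imp(1)[OF assms(1) r0] by blast
  ultimately show thesis using that prefix_of_appendD by metis
qed

theorem lemma4p4:
  fixes \<sigma> :: "bool list \<Rightarrow> bool list" and k :: nat
  assumes "k \<ge> 2"
    and "erasing_subst \<sigma> k"
    and "strongly_erasing \<sigma> k"
    and "w_eps \<sigma> k \<noteq> replicate k True"
    and "optimal_subst \<sigma> k"
  shows "\<forall>x \<in> {0..1}. \<forall>\<delta> > 0. \<exists>z \<in> {0..1}. \<bar>x - z\<bar> < \<delta> \<and>
           (\<exists>n. \<bar>(f_sigma \<sigma> k ^^ n) x - (f_sigma \<sigma> k ^^ n) z\<bar> \<ge> 1/2)"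
proof (intro ballI allI impI)
  fix x \<delta> :: real
  assume "x \<in> {0..1}" and "0 < \<delta>"
  let ?f = "f_sigma \<sigma> k"
  obtain L where L: "1 / 2 ^ L < \<delta>"
    using real_arch_pow_inv[OF \<open>0 < \<delta>\<close>, of "1/2"] by (auto simp: power_one_over)
  obtain w where near: "\<And>u. prefix_of w u \<Longrightarrow> \<bar>x - ival u\<bar> \<le> 1 / 2 ^ L"
    using dyadic_cylinder_near[of x L] \<open>x \<in> {0..1}\<close> by auto
  have "0 < k" using assms(1) by simp
  obtain n where onto: "\<And>t. \<exists>u. prefix_of w u \<and> (?f ^^ n) (ival u) = ival t"
    using strongly_erasing_cylinder_onto[OF \<open>0 < k\<close> assms(2,3,5)] by blast
  define t where "t = (\<lambda>_::nat. (?f ^^ n) x \<le> 1/2)"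
  obtain u where "prefix_of w u" and u: "(?f ^^ n) (ival u) = ival t" using onto by blast
  show "\<exists>z\<in>{0..1}. \<bar>x - z\<bar> < \<delta> \<and> (\<exists>n. 1/2 \<le> \<bar>(?f ^^ n) x - (?f ^^ n) z\<bar>)"
  proof (intro bexI conjI exI)
    show "ival u \<in> {0..1}" using ival_nonneg ival_le_1 by simp
    show "\<bar>x - ival u\<bar> < \<delta>" using near[OF \<open>prefix_of w u\<close>] L by simp
    show "1/2 \<le> \<bar>(?f ^^ n) x - (?f ^^ n) (ival u)\<bar>"
      unfolding u t_def by (cases "(?f ^^ n) x \<le> 1/2") (simp_all add: ival_const_True ival_const_False)
  qed
qed

end
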